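(* Let $\lambda_1>\lambda_2=\lambda_3>0$, $D=\mathrm{diag}(\lambda_1,\lambda_2,\lambda_2)$, and $G=\widetilde W_{1,0}(\cdot;D)\circ\mathbf P:S^3\to\mathbb R$. Then: (i) The global maxima of $G$ are the points $(0,0,\pm1,0)$, $(0,0,0,\pm1)$ and $(0,0,\cos\alpha,\sin\alpha)$, $\alpha\in[0,2\pi)$; correspondingly the rotations $\mathrm{diag}(-1,1,-1)$, $\mathrm{diag}(-1,-1,1)$ and $$\begin{pmatrix}-1&0&0\\0&\cos2\alpha&\sin2\alpha\\0&\sin2\alpha&-\cos2\alpha\end{pmatrix},\ \alpha\in[0,2\pi),$$ are the global maxima of $\widetilde W_{1,0}(\cdot;D)$ on $SO(3)$. (ii) If $s=\lambda_1+\lambda_2>2$, then, with $a=\sqrt{\frac12+\frac1s}$, $b=\sqrt{\frac12-\frac1s}$, the global minima of $G$ are the points $(\pm a,0,0,\pm b)$, $(\pm a,0,\pm b,0)$ (all sign combinations) and $(\pm a,0,b\cos\alpha,b\sin\alpha)$, $\alpha\in[0,2\pi)$; the corresponding rotations $\mathbf P(q)$ are the global minima of $\widetilde W_{1,0}(\cdot;D)$ on $SO(3)$, with minimal value $(\lambda_2-1)^2+\frac12(\lambda_1-\lambda_2)^2$. (iii) If $\lambda_1+\lambda_2\le2$, then $(\pm1,0,0,0)$ are the only global minima of $G$, and $\mathbb I_3$ is the global minimum of $\widetilde W_{1,0}(\cdot;D)$.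
   Context: $\mathrm{sym}(Y)=\tfrac12(Y+Y^T)$, $\|Y\|^2=\mathrm{tr}(Y^TY)$. $\widetilde W_{1,0}(R;D)=\|\mathrm{sym}(R^TD-\mathbb I_3)\|^2$ for $R\in SO(3)$. $S^3\subset\mathbb R^4$ is the unit sphere and $\mathbf P:S^3\to SO(3)$ is $$\mathbf P(q)=\begin{pmatrix}(q^0)^2+(q^1)^2-(q^2)^2-(q^3)^2 & 2(q^1q^2-q^0q^3) & 2(q^1q^3+q^0q^2)\\ 2(q^1q^2+q^0q^3) & (q^0)^2-(q^1)^2+(q^2)^2-(q^3)^2 & 2(q^2q^3-q^0q^1)\\ 2(q^1q^3-q^0q^2) & 2(q^2q^3+q^0q^1) & (q^0)^2-(q^1)^2-(q^2)^2+(q^3)^2\end{pmatrix},$$ for $q=(q^0,q^1,q^2,q^3)\in S^3$. *)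

theory Defs
  imports "HOL-Analysis.Analysis"
begin

type_synonym mat3 = "real^3^3"

definition SO3 :: "mat3 set" where
  "SO3 = {R. transpose R ** R = mat 1 \<and> det R = 1}"

definition msym :: "mat3 \<Rightarrow> mat3" where
  "msym Y = (1/2) *\<^sub>R (Y + transpose Y)"

definition frob_sq :: "mat3 \<Rightarrow> real" where
  "frob_sq Y = trace (transpose Y ** Y)"

definition W10 :: "mat3 \<Rightarrow> mat3 \<Rightarrow> real" where
  "W10 D R = frob_sq (msym (transpose R ** D - mat 1))"

definition diag3 :: "real \<Rightarrow> real \<Rightarrow> real \<Rightarrow> mat3" where
  "diag3 a b c = vector [vector [a,0,0], vector [0,b,0], vector [0,0,c]]"

definition S3 :: "(real \<times> real \<times> real \<times> real) set" where
  "S3 = {(q0,q1,q2,q3). q0^2 + q1^2 + q2^2 + q3^2 = 1}"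

fun quatP :: "real \<times> real \<times> real \<times> real \<Rightarrow> mat3" where
  "quatP (q0,q1,q2,q3) = vector [
     vector [q0^2 + q1^2 - q2^2 - q3^2, 2*(q1*q2 - q0*q3), 2*(q1*q3 + q0*q2)],
     vector [2*(q1*q2 + q0*q3), q0^2 - q1^2 + q2^2 - q3^2, 2*(q2*q3 - q0*q1)],
     vector [2*(q1*q3 - q0*q2), 2*(q2*q3 + q0*q1), q0^2 - q1^2 - q2^2 + q3^2]]"

definition argmax_on :: "'a set \<Rightarrow> ('a \<Rightarrow> real) \<Rightarrow> 'a set" where
  "argmax_on S f = {x \<in> S. \<forall>y\<in>S. f y \<le> f x}"

definition argmin_on :: "'a set \<Rightarrow> ('a \<Rightarrow> real) \<Rightarrow> 'a set" where
  "argmin_on S f = {x \<in> S. \<forall>y\<in>S. f x \<le> f y}"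

end

theory Submission
  imports Defs
begin

text \<open>On \<open>S\<^sup>3\<close> we have \<open>q2\<^sup>2 + q3\<^sup>2 = 1 - q0\<^sup>2 - q1\<^sup>2\<close>, and the energy becomes
  \<open>G(q) = ((l1+l2)(2q0\<^sup>2-1) + 2(l1-l2)q1\<^sup>2 - 2)\<^sup>2/2 + 4l2(l1-l2)q1\<^sup>2 + (l2-1)\<^sup>2 + (l1-l2)\<^sup>2/2\<close>.
  Its value at \<open>q0 = q1 = 0\<close> minus \<open>G(q)\<close> is a sum of nonnegative terms vanishing exactly when
  \<open>q0 = q1 = 0\<close>. For the minimum, the second summand forces \<open>q1 = 0\<close>; the first can be made zero
  iff \<open>l1 + l2 > 2\<close>, and otherwise it is smallest at \<open>q0\<^sup>2 = 1\<close>.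
  The statements about \<open>SO(3)\<close> follow because \<open>P\<close> maps \<open>S\<^sup>3\<close> onto \<open>SO(3)\<close>: a preimage of a
  rotation is given by the Euler--Rodrigues inversion formulas, applied after changing the signs
  of two columns so that the relevant trace expression is positive.\<close>

lemma mat3_eq_iff:
  "(A::mat3) = B \<longleftrightarrow>
    A$1$1 = B$1$1 \<and> A$1$2 = B$1$2 \<and> A$1$3 = B$1$3 \<and>
    A$2$1 = B$2$1 \<and> A$2$2 = B$2$2 \<and> A$2$3 = B$2$3 \<and>
    A$3$1 = B$3$1 \<and> A$3$2 = B$3$2 \<and> A$3$3 = B$3$3"
  by (simp add: vec_eq_iff forall_3 conj_ac)

lemma S3_iff: "(q0,q1,q2,q3) \<in> S3 \<longleftrightarrow> q0^2 + q1^2 + q2^2 + q3^2 = 1"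
  unfolding S3_def by simp

lemma W10_diag3:
  "W10 (diag3 a b c) R =
    (a*R$1$1 - 1)^2 + (b*R$2$2 - 1)^2 + (c*R$3$3 - 1)^2
    + 2*((a*R$1$2 + b*R$2$1)/2)^2 + 2*((a*R$1$3 + c*R$3$1)/2)^2 + 2*((b*R$2$3 + c*R$3$2)/2)^2"
  unfolding W10_def frob_sq_def msym_def trace_def diag3_def
  by (simp add: sum_3 matrix_matrix_mult_def transpose_def mat_def power2_eq_square
      algebra_simps, simp add: field_simps)

section \<open>The map \<open>P\<close> from \<open>S\<^sup>3\<close> onto \<open>SO(3)\<close>\<close>

lemma quatP_in_SO3:
  assumes "q \<in> S3"
  shows "quatP q \<in> SO3"
proof -
  obtain q0 q1 q2 q3 where q: "q = (q0,q1,q2,q3)" and sphere: "q0^2 + q1^2 + q2^2 + q3^2 = 1"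
    using assms by (cases q) (auto simp: S3_iff)
  have "transpose (quatP q) ** quatP q = mat 1"
    unfolding mat3_eq_iff q using sphere
    by (simp add: matrix_matrix_mult_def transpose_def mat_def sum_3; algebra)
  moreover have "det (quatP q) = 1"
    unfolding det_3 q using sphere by simp algebra
  ultimately show ?thesis unfolding SO3_def by simp
qed

definition quat_rep ::
  "real \<times> real \<times> real \<times> real \<Rightarrow> real \<Rightarrow> real \<Rightarrow> real \<Rightarrow> real \<Rightarrow> real \<Rightarrow> real \<Rightarrow> real \<Rightarrow> real \<Rightarrow> real \<Rightarrow> bool"
where
  "quat_rep q a b c d e f g h i \<longleftrightarrow>
     q \<in> S3 \<and> quatP q = vector [vector [a,b,c], vector [d,e,f], vector [g,h,i]]"

lemma quat_rep_iff:
  "quat_rep (q0,q1,q2,q3) a b c d e f g h i \<longleftrightarrow> q0^2 + q1^2 + q2^2 + q3^2 = 1 \<and>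
     a = q0^2 + q1^2 - q2^2 - q3^2 \<and> b = 2*(q1*q2 - q0*q3) \<and> c = 2*(q1*q3 + q0*q2) \<and>
     d = 2*(q1*q2 + q0*q3) \<and> e = q0^2 - q1^2 + q2^2 - q3^2 \<and> f = 2*(q2*q3 - q0*q1) \<and>
     g = 2*(q1*q3 - q0*q2) \<and> h = 2*(q2*q3 + q0*q1) \<and> i = q0^2 - q1^2 - q2^2 + q3^2"
  unfolding quat_rep_def S3_iff mat3_eq_iff by auto

text \<open>Stated for nine reals rather than for a matrix so that the sign-flipped matrices in
  \<open>quat_rep_exists\<close> are again instances.\<close>
locale rotation_entries =
  fixes a b c d e f g h i :: real
  assumes r1: "a*a+b*b+c*c = 1" and r2: "d*d+e*e+f*f = 1" and r3: "g*g+h*h+i*i = 1"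
    and r12: "a*d+b*e+c*f = 0" and r13: "a*g+b*h+c*i = 0" and r23: "d*g+e*h+f*i = 0"
    and c1: "a*a+d*d+g*g = 1" and c2: "b*b+e*e+h*h = 1" and c3: "c*c+f*f+i*i = 1"
    and c12: "a*b+d*e+g*h = 0" and c13: "a*c+d*f+g*i = 0" and c23: "b*c+e*f+h*i = 0"
    and x1: "a = e*i - f*h" and x2: "b = f*g - d*i" and x3: "c = d*h - e*g"
    and x4: "d = h*c - i*b" and x5: "e = i*a - g*c" and x6: "f = g*b - h*a"
    and x7: "g = b*f - c*e" and x8: "h = c*d - a*f" and x9: "i = a*e - b*d"
begin

lemmas entry_relations = r1 r2 r3 r12 r13 r23 c1 c2 c3 c12 c13 c23 x1 x2 x3 x4 x5 x6 x7 x8 x9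

lemma Euler_Rodrigues_identities:
  "(h-f)^2 = (1+a+e+i)*(1+a-e-i)" "(c-g)^2 = (1+a+e+i)*(1-a+e-i)"
  "(d-b)^2 = (1+a+e+i)*(1-a-e+i)" "(h-f)*(c-g) = (1+a+e+i)*(b+d)"
  "(h-f)*(d-b) = (1+a+e+i)*(c+g)" "(c-g)*(d-b) = (1+a+e+i)*(f+h)"
  using entry_relations by algebra+

lemma quat_rep_if_trace_pos:
  assumes "1+a+e+i > 0"
  shows "\<exists>q. quat_rep q a b c d e f g h i"
proof -
  define t where "t = 1+a+e+i"
  have t: "t > 0" using assms t_def by simp
  define q0 where "q0 = sqrt t / 2"
  define q1 where "q1 = (h-f)/(4*q0)"
  define q2 where "q2 = (c-g)/(4*q0)"
  define q3 where "q3 = (d-b)/(4*q0)"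
  have q0_pos: "q0 > 0" and q0_sq: "q0^2 = t/4"
    using t by (simp_all add: q0_def power_divide)
  have q0_mult: "q0*q1 = (h-f)/4" "q0*q2 = (c-g)/4" "q0*q3 = (d-b)/4"
    using q0_pos by (simp_all add: q1_def q2_def q3_def)
  have quotient_mult: "(x/(4*q0))*(y/(4*q0)) = x*y/(4*t)" for x y
    using q0_sq q0_pos by (simp add: field_simps power2_eq_square)
  have products: "q1^2 = (1+a-e-i)/4" "q2^2 = (1-a+e-i)/4" "q3^2 = (1-a-e+i)/4"
    "q1*q2 = (b+d)/4" "q1*q3 = (c+g)/4" "q2*q3 = (f+h)/4"
    using Euler_Rodrigues_identities t
    unfolding power2_eq_square q1_def q2_def q3_def quotient_mult t_def[symmetric] by simp_all
  have "quat_rep (q0,q1,q2,q3) a b c d e f g h i"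
    unfolding quat_rep_iff q0_sq products q0_mult t_def by (simp add: field_simps)
  then show ?thesis by blast
qed

text \<open>The four numbers \<open>1 \<plusminus> a \<plusminus> e \<plusminus> i\<close> (even number of minus signs) sum to 4, so one is
  positive; flipping the signs of two columns reduces each case to the first.\<close>
lemma quat_rep_exists: "\<exists>q. quat_rep q a b c d e f g h i"
proof -
  have "(1+a+e+i) + (1+a-e-i) + (1-a+e-i) + (1-a-e+i) = 4" by simp
  then consider "1+a+e+i > 0" | "1+a-e-i > 0" | "1-a+e-i > 0" | "1-a-e+i > 0" by linarith
  then show ?thesis
  proof cases
    case 1
    then show ?thesis by (rule quat_rep_if_trace_pos)
  next
    case 2
    interpret flipped: rotation_entries a "-b" "-c" d "-e" "-f" g "-h" "-i"
      by (unfold_locales; (simp only: mult_minus_left mult_minus_right minus_minus)?;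
          insert entry_relations; linarith)
    obtain p0 p1 p2 p3 where "quat_rep (p0,p1,p2,p3) a (-b) (-c) d (-e) (-f) g (-h) (-i)"
      using flipped.quat_rep_if_trace_pos 2 by auto
    then have "quat_rep (-p1,p0,p3,-p2) a b c d e f g h i"
      unfolding quat_rep_iff by (simp add: algebra_simps)
    then show ?thesis by blast
  next
    case 3
    interpret flipped: rotation_entries "-a" b "-c" "-d" e "-f" "-g" h "-i"
      by (unfold_locales; (simp only: mult_minus_left mult_minus_right minus_minus)?;
          insert entry_relations; linarith)
    obtain p0 p1 p2 p3 where "quat_rep (p0,p1,p2,p3) (-a) b (-c) (-d) e (-f) (-g) h (-i)"
      using flipped.quat_rep_if_trace_pos 3 by auto
    then have "quat_rep (-p2,-p3,p0,p1) a b c d e f g h i"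
      unfolding quat_rep_iff by (simp add: algebra_simps)
    then show ?thesis by blast
  next
    case 4
    interpret flipped: rotation_entries "-a" "-b" c "-d" "-e" f "-g" "-h" i
      by (unfold_locales; (simp only: mult_minus_left mult_minus_right minus_minus)?;
          insert entry_relations; linarith)
    obtain p0 p1 p2 p3 where "quat_rep (p0,p1,p2,p3) (-a) (-b) c (-d) (-e) f (-g) (-h) i"
      using flipped.quat_rep_if_trace_pos 4 by auto
    then have "quat_rep (-p3,p2,-p1,p0) a b c d e f g h i"
      unfolding quat_rep_iff by (simp add: algebra_simps)
    then show ?thesis by blast
  qed
qed

end

lemma sum_squares3_eq_0: "(x::real)^2 + y^2 + z^2 = 0 \<Longrightarrow> x = 0 \<and> y = 0 \<and> z = 0"
  by (smt (verit) power2_less_eq_zero_iff zero_le_power2)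

text \<open>A row \<open>u\<close> of a rotation matrix equals the cross product \<open>v \<times> w\<close> of the next two rows because
  \<open>|u - v \<times> w|\<^sup>2 = |u|\<^sup>2 - 2 det R + |v|\<^sup>2|w|\<^sup>2 - (v\<bullet>w)\<^sup>2 = 0\<close>.\<close>
lemma SO3_rotation_entries:
  assumes "R \<in> SO3"
  shows "rotation_entries (R$1$1) (R$1$2) (R$1$3) (R$2$1) (R$2$2) (R$2$3) (R$3$1) (R$3$2) (R$3$3)"
proof -
  have cols: "transpose R ** R = mat 1" and det: "det R = 1"
    using assms unfolding SO3_def by auto
  then have rows: "R ** transpose R = mat 1"
    using orthogonal_matrix orthogonal_matrix_def by blast
  define a where "a = R$1$1" define b where "b = R$1$2" define c where "c = R$1$3"
  define d where "d = R$2$1" define e where "e = R$2$2" define f where "f = R$2$3"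
  define g where "g = R$3$1" define h where "h = R$3$2" define i where "i = R$3$3"
  note entries = a_def b_def c_def d_def e_def f_def g_def h_def i_def
  have cc: "a*a+d*d+g*g = 1" "b*b+e*e+h*h = 1" "c*c+f*f+i*i = 1"
     "a*b+d*e+g*h = 0" "a*c+d*f+g*i = 0" "b*c+e*f+h*i = 0"
    using cols unfolding mat3_eq_iff entries
    by (simp_all add: matrix_matrix_mult_def transpose_def mat_def sum_3 algebra_simps)
  have rr: "a*a+b*b+c*c = 1" "d*d+e*e+f*f = 1" "g*g+h*h+i*i = 1"
     "a*d+b*e+c*f = 0" "a*g+b*h+c*i = 0" "d*g+e*h+f*i = 0"
    using rows unfolding mat3_eq_iff entries
    by (simp_all add: matrix_matrix_mult_def transpose_def mat_def sum_3 algebra_simps)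
  have dd: "a*e*i + b*f*g + c*d*h - a*f*h - b*d*i - c*e*g = 1"
    using det unfolding det_3 entries by (simp add: algebra_simps)
  have "(g - (b*f-c*e))^2 + (h - (c*d-a*f))^2 + (i - (a*e-b*d))^2 =
      (g*g+h*h+i*i) - 2*(a*e*i + b*f*g + c*d*h - a*f*h - b*d*i - c*e*g)
      + (a*a+b*b+c*c)*(d*d+e*e+f*f) - (a*d+b*e+c*f)^2"
    "(a - (e*i-f*h))^2 + (b - (f*g-d*i))^2 + (c - (d*h-e*g))^2 =
      (a*a+b*b+c*c) - 2*(a*e*i + b*f*g + c*d*h - a*f*h - b*d*i - c*e*g)
      + (d*d+e*e+f*f)*(g*g+h*h+i*i) - (d*g+e*h+f*i)^2"
    "(d - (h*c-i*b))^2 + (e - (i*a-g*c))^2 + (f - (g*b-h*a))^2 =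
      (d*d+e*e+f*f) - 2*(a*e*i + b*f*g + c*d*h - a*f*h - b*d*i - c*e*g)
      + (g*g+h*h+i*i)*(a*a+b*b+c*c) - (a*g+b*h+c*i)^2"
    by algebra+
  then have "(g - (b*f-c*e))^2 + (h - (c*d-a*f))^2 + (i - (a*e-b*d))^2 = 0"
       "(a - (e*i-f*h))^2 + (b - (f*g-d*i))^2 + (c - (d*h-e*g))^2 = 0"
       "(d - (h*c-i*b))^2 + (e - (i*a-g*c))^2 + (f - (g*b-h*a))^2 = 0"
    using rr dd by simp_all
  then have "g = b*f - c*e" "h = c*d - a*f" "i = a*e - b*d"
            "a = e*i - f*h" "b = f*g - d*i" "c = d*h - e*g"
            "d = h*c - i*b" "e = i*a - g*c" "f = g*b - h*a"
    by (auto dest!: sum_squares3_eq_0)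
  then have "rotation_entries a b c d e f g h i"
    using rr cc by unfold_locales
  then show ?thesis unfolding entries .
qed

lemma quatP_image_S3: "quatP ` S3 = SO3"
proof
  show "quatP ` S3 \<subseteq> SO3" using quatP_in_SO3 by auto
  show "SO3 \<subseteq> quatP ` S3"
  proof
    fix R assume "R \<in> SO3"
    then interpret rotation_entries
      "R$1$1" "R$1$2" "R$1$3" "R$2$1" "R$2$2" "R$2$3" "R$3$1" "R$3$2" "R$3$3"
      by (rule SO3_rotation_entries)
    obtain q where
      "quat_rep q (R$1$1) (R$1$2) (R$1$3) (R$2$1) (R$2$2) (R$2$3) (R$3$1) (R$3$2) (R$3$3)"
      using quat_rep_exists by blast
    then show "R \<in> quatP ` S3"
      unfolding quat_rep_def by (metis (no_types, lifting) image_eqI mat3_eq_iff vector_3)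
  qed
qed

declare quatP.simps [simp del]

section \<open>The energy on \<open>S\<^sup>3\<close>\<close>

abbreviation quat_energy :: "real \<Rightarrow> real \<Rightarrow> real \<times> real \<times> real \<times> real \<Rightarrow> real" where
  "quat_energy l1 l2 q \<equiv> W10 (diag3 l1 l2 l2) (quatP q)"

lemma quat_energy_on_S3:
  assumes "(q0,q1,q2,q3) \<in> S3"
  shows "quat_energy l1 l2 (q0,q1,q2,q3) =
     ((l1+l2)*(2*q0^2-1) + 2*(l1-l2)*q1^2 - 2)^2/2 + 4*l2*(l1-l2)*q1^2 + (l2-1)^2 + (l1-l2)^2/2"
  using assms unfolding W10_diag3 S3_iff by (simp add: quatP.simps) algebra

lemma quat_energy_max_gap:
  assumes "(q0,q1,q2,q3) \<in> S3"
  shows "(l1+l2+2)^2/2 + (l2-1)^2 + (l1-l2)^2/2 - quat_energy l1 l2 (q0,q1,q2,q3) =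
    8*l2^2*q0^2*q1^2 + 2*(l1+l2)^2*q0^2*(q2^2+q3^2) + 2*(l1-l2)^2*q1^2*(q2^2+q3^2)
    + 4*(l1+l2)*q0^2 + 4*(l1-l2)*q1^2"
proof -
  have identity: "(l1+l2+2)^2/2 + (l2-1)^2 + (l1-l2)^2/2 -
     (((l1+l2)*(2*(1-Y-Z)-1) + 2*(l1-l2)*Y - 2)^2/2 + 4*l2*(l1-l2)*Y + (l2-1)^2 + (l1-l2)^2/2) =
     8*l2^2*(1-Y-Z)*Y + 2*(l1+l2)^2*(1-Y-Z)*Z + 2*(l1-l2)^2*Y*Z
     + 4*(l1+l2)*(1-Y-Z) + 4*(l1-l2)*Y" for Y Z :: real
    by (simp add: field_simps power2_eq_square)
  have "q0^2 = 1 - q1^2 - (q2^2+q3^2)" using assms by (simp add: S3_iff)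
  then show ?thesis
    unfolding quat_energy_on_S3[OF assms] using identity[of "q1^2" "q2^2+q3^2"]
    by (simp add: mult.assoc)
qed

lemma quat_energy_min_gap:
  assumes "(q0,q1,q2,q3) \<in> S3"
  shows "quat_energy l1 l2 (q0,q1,q2,q3) - ((l1+l2-2)^2/2 + (l2-1)^2 + (l1-l2)^2/2) =
    (4*l2*q1^2 + 2*(l1+l2)*(q2^2+q3^2))*(2-(l1+l2)) + (4*l2*q1^2 + 2*(l1+l2)*(q2^2+q3^2))^2/2
    + 4*l2*(l1-l2)*q1^2"
proof -
  have identity: "((l1+l2)*(2*(1-Y-Z)-1) + 2*(l1-l2)*Y - 2)^2/2 + 4*l2*(l1-l2)*Y + (l2-1)^2
     + (l1-l2)^2/2 - ((l1+l2-2)^2/2 + (l2-1)^2 + (l1-l2)^2/2) =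
     (4*l2*Y + 2*(l1+l2)*Z)*(2-(l1+l2)) + (4*l2*Y + 2*(l1+l2)*Z)^2/2 + 4*l2*(l1-l2)*Y"
    for Y Z :: real
    by (simp add: field_simps power2_eq_square)
  have "q0^2 = 1 - q1^2 - (q2^2+q3^2)" using assms by (simp add: S3_iff)
  then show ?thesis
    unfolding quat_energy_on_S3[OF assms] using identity[of "q1^2" "q2^2+q3^2"] by simp
qed

lemma quat_energy_le_max:
  assumes "l1 > l2" "l2 > 0" and q: "(q0,q1,q2,q3) \<in> S3"
  defines "M \<equiv> (l1+l2+2)^2/2 + (l2-1)^2 + (l1-l2)^2/2"
  shows "quat_energy l1 l2 (q0,q1,q2,q3) \<le> M"
    and "quat_energy l1 l2 (q0,q1,q2,q3) = M \<longleftrightarrow> q0 = 0 \<and> q1 = 0"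
proof -
  have pos: "l1 + l2 > 0" "l1 - l2 > 0" using assms by auto
  have terms_nonneg: "8*l2^2*q0^2*q1^2 \<ge> 0" "2*(l1+l2)^2*q0^2*(q2^2+q3^2) \<ge> 0"
     "2*(l1-l2)^2*q1^2*(q2^2+q3^2) \<ge> 0" "4*(l1+l2)*q0^2 \<ge> 0" "4*(l1-l2)*q1^2 \<ge> 0"
    using pos by simp_all
  note gap = quat_energy_max_gap[OF q, of l1 l2, folded M_def]
  show "quat_energy l1 l2 (q0,q1,q2,q3) \<le> M" using gap terms_nonneg by linarith
  show "quat_energy l1 l2 (q0,q1,q2,q3) = M \<longleftrightarrow> q0 = 0 \<and> q1 = 0"
  proof
    assume "quat_energy l1 l2 (q0,q1,q2,q3) = M"
    then have "4*(l1+l2)*q0^2 = 0" "4*(l1-l2)*q1^2 = 0" using gap terms_nonneg by linarith+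
    then show "q0 = 0 \<and> q1 = 0" using pos by simp
  next
    assume zero: "q0 = 0 \<and> q1 = 0"
    then show "quat_energy l1 l2 (q0,q1,q2,q3) = M" using gap zero by simp
  qed
qed

lemma quat_energy_lower_bound:
  assumes "l1 > l2" "l2 > 0" and q: "(q0,q1,q2,q3) \<in> S3"
  defines "m \<equiv> (l2-1)^2 + (l1-l2)^2/2"
  shows "quat_energy l1 l2 (q0,q1,q2,q3) \<ge> m"
    and "quat_energy l1 l2 (q0,q1,q2,q3) = m \<longleftrightarrow> q1 = 0 \<and> (l1+l2)*(2*q0^2-1) = 2"
proof -
  have pos: "4*l2*(l1-l2) > 0" using assms by simp
  then have q1_term: "4*l2*(l1-l2)*q1^2 \<ge> 0" by simp
  note energy = quat_energy_on_S3[OF q, of l1 l2, folded m_def]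
  show "quat_energy l1 l2 (q0,q1,q2,q3) \<ge> m" unfolding energy m_def using q1_term by simp
  show "quat_energy l1 l2 (q0,q1,q2,q3) = m \<longleftrightarrow> q1 = 0 \<and> (l1+l2)*(2*q0^2-1) = 2"
  proof
    assume "quat_energy l1 l2 (q0,q1,q2,q3) = m"
    then have "((l1+l2)*(2*q0^2-1) + 2*(l1-l2)*q1^2 - 2)^2/2 + 4*l2*(l1-l2)*q1^2 = 0"
      unfolding energy m_def by simp
    then have "4*l2*(l1-l2)*q1^2 = 0" "((l1+l2)*(2*q0^2-1) + 2*(l1-l2)*q1^2 - 2)^2 = 0"
      using q1_term zero_le_power2[of "(l1+l2)*(2*q0^2-1) + 2*(l1-l2)*q1^2 - 2"] by linarith+
    then show "q1 = 0 \<and> (l1+l2)*(2*q0^2-1) = 2" using pos by auto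
  next
    assume "q1 = 0 \<and> (l1+l2)*(2*q0^2-1) = 2"
    then show "quat_energy l1 l2 (q0,q1,q2,q3) = m" unfolding energy m_def by simp
  qed
qed

lemma quat_energy_lower_bound_sum_le_2:
  assumes "l1 > l2" "l2 > 0" "l1 + l2 \<le> 2" and q: "(q0,q1,q2,q3) \<in> S3"
  defines "m \<equiv> (l1+l2-2)^2/2 + (l2-1)^2 + (l1-l2)^2/2"
  shows "quat_energy l1 l2 (q0,q1,q2,q3) \<ge> m"
    and "quat_energy l1 l2 (q0,q1,q2,q3) = m \<longleftrightarrow> q1 = 0 \<and> q2 = 0 \<and> q3 = 0"
proof -
  define u where "u = 4*l2*q1^2 + 2*(l1+l2)*(q2^2+q3^2)"
  have pos: "l2 > 0" "l1 + l2 > 0" "l1 - l2 > 0" using assms by auto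
  have u_parts: "4*l2*q1^2 \<ge> 0" "2*(l1+l2)*(q2^2+q3^2) \<ge> 0" using pos by simp_all
  have terms_nonneg: "u*(2-(l1+l2)) \<ge> 0" "u^2/2 \<ge> 0" "4*l2*(l1-l2)*q1^2 \<ge> 0"
    using u_parts assms(3) pos unfolding u_def by simp_all
  note gap = quat_energy_min_gap[OF q, of l1 l2, folded m_def u_def]
  show "quat_energy l1 l2 (q0,q1,q2,q3) \<ge> m" using gap terms_nonneg by linarith
  show "quat_energy l1 l2 (q0,q1,q2,q3) = m \<longleftrightarrow> q1 = 0 \<and> q2 = 0 \<and> q3 = 0"
  proof
    assume "quat_energy l1 l2 (q0,q1,q2,q3) = m"
    then have "u^2/2 = 0" using gap terms_nonneg by linarith
    then have "u = 0" by simp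
    then have "4*l2*q1^2 = 0" "2*(l1+l2)*(q2^2+q3^2) = 0" using u_parts unfolding u_def by linarith+
    then have "q1 = 0" "q2^2 + q3^2 = 0" using pos by auto
    then show "q1 = 0 \<and> q2 = 0 \<and> q3 = 0" by (simp add: add_nonneg_eq_0_iff)
  next
    assume zero: "q1 = 0 \<and> q2 = 0 \<and> q3 = 0"
    then have "u = 0" unfolding u_def by simp
    then show "quat_energy l1 l2 (q0,q1,q2,q3) = m" using gap zero by simp
  qed
qed

section \<open>Extremal sets\<close>

lemma argmax_on_attained:
  assumes "\<forall>y\<in>S. f y \<le> m" "x \<in> S" "f x = m"
  shows "argmax_on S f = {y\<in>S. f y = m}"
  using assms unfolding argmax_on_def by force

lemma argmin_on_attained:
  assumes "\<forall>y\<in>S. m \<le> f y" "x \<in> S" "f x = m"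
  shows "argmin_on S f = {y\<in>S. f y = m}"
  using assms unfolding argmin_on_def by force

lemma argmax_on_image:
  assumes "h ` A = B"
  shows "argmax_on B f = h ` argmax_on A (\<lambda>x. f (h x))"
  using assms unfolding argmax_on_def by blast

lemma argmin_on_image:
  assumes "h ` A = B"
  shows "argmin_on B f = h ` argmin_on A (\<lambda>x. f (h x))"
  using assms unfolding argmin_on_def by blast

lemma S3_circle_eq:
  "{(q0,q1,q2,q3). (q0,q1,q2,q3) \<in> S3 \<and> q0 = 0 \<and> q1 = 0} =
     {(0,0,1,0), (0,0,-1,0), (0,0,0,1), (0,0,0,-1)} \<union>
     {(0::real, 0::real, cos \<alpha>, sin \<alpha>) | \<alpha>. 0 \<le> \<alpha> \<and> \<alpha> < 2*pi}"
  (is "?L = ?R")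
proof (intro set_eqI iffI)
  fix q assume "q \<in> ?L"
  then obtain q2 q3 where q: "q = (0,0,q2,q3)" and "q2^2 + q3^2 = 1"
    by (auto simp: S3_iff)
  then obtain \<alpha> where "0 \<le> \<alpha>" "\<alpha> < 2*pi" "q2 = cos \<alpha>" "q3 = sin \<alpha>"
    using sincos_total_2pi by metis
  then show "q \<in> ?R" using q by blast
qed (auto simp: S3_iff)

lemma argmax_quat_energy:
  assumes "l1 > l2" "l2 > 0"
  shows "argmax_on S3 (quat_energy l1 l2) =
     {(0,0,1,0), (0,0,-1,0), (0,0,0,1), (0,0,0,-1)} \<union>
     {(0,0,cos \<alpha>, sin \<alpha>) | \<alpha>. 0 \<le> \<alpha> \<and> \<alpha> < 2*pi}"
proof -
  define M where "M = (l1+l2+2)^2/2 + (l2-1)^2 + (l1-l2)^2/2"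
  have "argmax_on S3 (quat_energy l1 l2) = {q\<in>S3. quat_energy l1 l2 q = M}"
  proof (rule argmax_on_attained)
    show "\<forall>q\<in>S3. quat_energy l1 l2 q \<le> M"
      using quat_energy_le_max(1)[OF assms] unfolding M_def by auto
    show "(0,0,1,0) \<in> S3" "quat_energy l1 l2 (0,0,1,0) = M"
      using quat_energy_le_max(2)[OF assms, of 0 0 1 0] unfolding M_def by (simp_all add: S3_iff)
  qed
  also have "\<dots> = {(q0,q1,q2,q3). (q0,q1,q2,q3) \<in> S3 \<and> q0 = 0 \<and> q1 = 0}"
    using quat_energy_le_max(2)[OF assms] unfolding M_def by auto
  finally show ?thesis unfolding S3_circle_eq .
qed

lemma quatP_half_turns:
  "quatP (0,0,1,0) = diag3 (-1) 1 (-1)" "quatP (0,0,-1,0) = diag3 (-1) 1 (-1)"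
  "quatP (0,0,0,1) = diag3 (-1) (-1) 1" "quatP (0,0,0,-1) = diag3 (-1) (-1) 1"
  by (simp_all add: quatP.simps diag3_def)

lemma quatP_circle:
  "quatP (0,0,cos x, sin x) =
     vector [vector [-1, 0, 0], vector [0, cos (2*x), sin (2*x)], vector [0, sin (2*x), - cos (2*x)]]"
proof -
  have "cos x ^2 + sin x^2 = 1" by simp
  then show ?thesis unfolding quatP.simps mat3_eq_iff cos_double sin_double
    by (simp add: algebra_simps)
qed

lemma quatP_identity: "quatP (1,0,0,0) = mat 1" "quatP (-1,0,0,0) = mat 1"
  unfolding mat3_eq_iff by (simp_all add: quatP.simps mat_def)

lemma argmax_W10_SO3:
  assumes "l1 > l2" "l2 > 0"
  shows "argmax_on SO3 (W10 (diag3 l1 l2 l2)) =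
     {diag3 (-1) 1 (-1), diag3 (-1) (-1) 1} \<union>
     {vector [vector [-1, 0, 0],
              vector [0, cos (2*\<alpha>), sin (2*\<alpha>)],
              vector [0, sin (2*\<alpha>), - cos (2*\<alpha>)]] | \<alpha>. 0 \<le> \<alpha> \<and> \<alpha> < 2*pi}"
proof -
  have "quatP ` {(0,0,cos \<alpha>, sin \<alpha>) | \<alpha>. 0 \<le> \<alpha> \<and> \<alpha> < 2*pi} =
     {vector [vector [-1, 0, 0],
              vector [0, cos (2*\<alpha>), sin (2*\<alpha>)],
              vector [0, sin (2*\<alpha>), - cos (2*\<alpha>)]] | \<alpha>. 0 \<le> \<alpha> \<and> \<alpha> < 2*pi}"
    by (auto simp flip: quatP_circle)
  then show ?thesis
    unfolding argmax_on_image[OF quatP_image_S3] argmax_quat_energy[OF assms]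
    by (simp add: quatP_half_turns)
qed

lemma S3_slice_eq_two_circles:
  fixes s a b :: real
  assumes s: "s > 2" and a: "a = sqrt (1/2 + 1/s)" and b: "b = sqrt (1/2 - 1/s)"
  shows "{(q0,q1,q2,q3). (q0,q1,q2,q3) \<in> S3 \<and> q1 = 0 \<and> s*(2*q0^2-1) = 2} =
     {(\<sigma>*a, 0, 0, \<tau>*b) | \<sigma> \<tau>. \<sigma> \<in> {1,-1} \<and> \<tau> \<in> {1,-1}} \<union>
     {(\<sigma>*a, 0, \<tau>*b, 0) | \<sigma> \<tau>. \<sigma> \<in> {1,-1} \<and> \<tau> \<in> {1,-1}} \<union>
     {(\<sigma>*a, 0, b * cos \<alpha>, b * sin \<alpha>) | \<sigma> \<alpha>. \<sigma> \<in> {1,-1} \<and> 0 \<le> \<alpha> \<and> \<alpha> < 2*pi}"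
    (is "?L = ?R")
proof -
  have "1/s < 1/2" using s by (simp add: field_simps)
  then have a2: "a^2 = 1/2 + 1/s" and b2: "b^2 = 1/2 - 1/s" and b_pos: "b > 0"
    using s unfolding a b by auto
  have on_slice: "s*(2*a^2-1) = 2" unfolding a2 using s by (simp add: field_simps)
  have sign_sq: "\<sigma> \<in> {1,-1} \<Longrightarrow> (\<sigma>*x)^2 = x^2" for \<sigma> x :: real by auto
  show ?thesis
  proof (intro set_eqI iffI)
    fix q assume "q \<in> ?L"
    then obtain q0 q2 q3 where q: "q = (q0,0,q2,q3)" "q0^2 + q2^2 + q3^2 = 1" "s*(2*q0^2-1) = 2"
      by (auto simp: S3_iff)
    then have "s*(2*q0^2-1) = s*(2*a^2-1)" using on_slice by simp
    then have "q0^2 = a^2" using s by simp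
    then obtain \<sigma> :: real where \<sigma>: "\<sigma> \<in> {1,-1}" "q0 = \<sigma>*a"
      by (metis insertI1 insert_commute mult_1 mult_minus1 power2_eq_iff)
    have "(q2/b)^2 + (q3/b)^2 = 1"
      using q(2) \<open>q0^2 = a^2\<close> a2 b2 b_pos by (simp add: power_divide field_simps)
    then obtain \<alpha> where "0 \<le> \<alpha>" "\<alpha> < 2*pi" "q2/b = cos \<alpha>" "q3/b = sin \<alpha>"
      using sincos_total_2pi by metis
    then have "q = (\<sigma>*a, 0, b * cos \<alpha>, b * sin \<alpha>)" "0 \<le> \<alpha>" "\<alpha> < 2*pi"
      using q \<sigma> b_pos by (auto simp: field_simps)
    then show "q \<in> ?R" using \<sigma>(1) by blast
  next
    fix q assume "q \<in> ?R"
    moreover have "(b * cos \<alpha>)^2 + (b * sin \<alpha>)^2 = b^2" for \<alpha>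
      by (metis mult_1_right power_mult_distrib distrib_left sin_cos_squared_add2)
    moreover have "a^2 + b^2 = 1" using a2 b2 by simp
    ultimately show "q \<in> ?L"
      using on_slice by (auto simp: S3_iff sign_sq add.assoc)
  qed
qed

lemma argmin_quat_energy_sum_gt_2_level:
  assumes "l1 > l2" "l2 > 0" "l1 + l2 > 2"
  shows "argmin_on S3 (quat_energy l1 l2) =
    {q\<in>S3. quat_energy l1 l2 q = (l2-1)^2 + (l1-l2)^2/2}"
proof (rule argmin_on_attained)
  show "\<forall>q\<in>S3. (l2-1)^2 + (l1-l2)^2/2 \<le> quat_energy l1 l2 q"
    using quat_energy_lower_bound(1)[OF assms(1,2)] by auto
  define a where "a = sqrt (1/2 + 1/(l1+l2))"
  define b where "b = sqrt (1/2 - 1/(l1+l2))"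
  have "(a,0,b,0) \<in> {(q0,q1,q2,q3). (q0,q1,q2,q3) \<in> S3 \<and> q1 = 0 \<and> (l1+l2)*(2*q0^2-1) = 2}"
    unfolding S3_slice_eq_two_circles[OF assms(3) a_def b_def] by force
  then show "(a,0,b,0) \<in> S3" "quat_energy l1 l2 (a,0,b,0) = (l2-1)^2 + (l1-l2)^2/2"
    using quat_energy_lower_bound(2)[OF assms(1,2)] by auto
qed

lemma argmin_quat_energy_sum_gt_2:
  assumes "l1 > l2" "l2 > 0" "l1 + l2 > 2"
    and "a = sqrt (1/2 + 1/(l1+l2))" "b = sqrt (1/2 - 1/(l1+l2))"
  shows "argmin_on S3 (quat_energy l1 l2) =
     {(\<sigma>*a, 0, 0, \<tau>*b) | \<sigma> \<tau>. \<sigma> \<in> {1,-1} \<and> \<tau> \<in> {1,-1}} \<union>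
     {(\<sigma>*a, 0, \<tau>*b, 0) | \<sigma> \<tau>. \<sigma> \<in> {1,-1} \<and> \<tau> \<in> {1,-1}} \<union>
     {(\<sigma>*a, 0, b * cos \<alpha>, b * sin \<alpha>) | \<sigma> \<alpha>. \<sigma> \<in> {1,-1} \<and> 0 \<le> \<alpha> \<and> \<alpha> < 2*pi}"
proof -
  have "{q\<in>S3. quat_energy l1 l2 q = (l2-1)^2 + (l1-l2)^2/2} =
      {(q0,q1,q2,q3). (q0,q1,q2,q3) \<in> S3 \<and> q1 = 0 \<and> (l1+l2)*(2*q0^2-1) = 2}"
    using quat_energy_lower_bound(2)[OF assms(1,2)] by auto
  then show ?thesis
    unfolding argmin_quat_energy_sum_gt_2_level[OF assms(1-3)]
      S3_slice_eq_two_circles[OF assms(3-5)] .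
qed

lemma W10_on_argmin_SO3_sum_gt_2:
  assumes "l1 > l2" "l2 > 0" "l1 + l2 > 2"
  shows "\<forall>R\<in>argmin_on SO3 (W10 (diag3 l1 l2 l2)).
    W10 (diag3 l1 l2 l2) R = (l2-1)^2 + (1/2)*(l1-l2)^2"
  unfolding argmin_on_image[OF quatP_image_S3] argmin_quat_energy_sum_gt_2_level[OF assms]
  by auto

lemma argmin_quat_energy_sum_le_2:
  assumes "l1 > l2" "l2 > 0" "l1 + l2 \<le> 2"
  shows "argmin_on S3 (quat_energy l1 l2) = {(1,0,0,0), (-1,0,0,0)}"
proof -
  define m where "m = (l1+l2-2)^2/2 + (l2-1)^2 + (l1-l2)^2/2"
  have "argmin_on S3 (quat_energy l1 l2) = {q\<in>S3. quat_energy l1 l2 q = m}"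
  proof (rule argmin_on_attained)
    show "\<forall>q\<in>S3. m \<le> quat_energy l1 l2 q"
      using quat_energy_lower_bound_sum_le_2(1)[OF assms] unfolding m_def by auto
    show "(1,0,0,0) \<in> S3" "quat_energy l1 l2 (1,0,0,0) = m"
      using quat_energy_lower_bound_sum_le_2(2)[OF assms, of 1 0 0 0] unfolding m_def
      by (simp_all add: S3_iff)
  qed
  also have "\<dots> = {(q0,q1,q2,q3). (q0,q1,q2,q3) \<in> S3 \<and> q1 = 0 \<and> q2 = 0 \<and> q3 = 0}"
    using quat_energy_lower_bound_sum_le_2(2)[OF assms] unfolding m_def by auto
  also have "\<dots> = {(1,0,0,0), (-1,0,0,0)}"
    by (auto simp: S3_iff power2_eq_1_iff)
  finally show ?thesis .
qed

theorem mainTheorem11: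
  fixes l1 l2 :: real
  assumes "l1 > l2" and "l2 > 0"
  shows
   "(argmax_on S3 (\<lambda>q. W10 (diag3 l1 l2 l2) (quatP q)) =
       {(0,0,1,0), (0,0,-1,0), (0,0,0,1), (0,0,0,-1)} \<union>
       {(0,0,cos \<alpha>, sin \<alpha>) | \<alpha>. 0 \<le> \<alpha> \<and> \<alpha> < 2*pi}
     \<and> argmax_on SO3 (W10 (diag3 l1 l2 l2)) =
       {diag3 (-1) 1 (-1), diag3 (-1) (-1) 1} \<union>
       {vector [vector [-1, 0, 0],
                vector [0, cos (2*\<alpha>), sin (2*\<alpha>)],
                vector [0, sin (2*\<alpha>), - cos (2*\<alpha>)]] | \<alpha>. 0 \<le> \<alpha> \<and> \<alpha> < 2*pi})
    \<and> (l1 + l2 > 2 \<longrightarrow>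
       (let s = l1 + l2; a = sqrt (1/2 + 1/s); b = sqrt (1/2 - 1/s);
            Q = {(\<sigma>*a, 0, 0, \<tau>*b) | \<sigma> \<tau>. \<sigma> \<in> {1,-1} \<and> \<tau> \<in> {1,-1}} \<union>
                {(\<sigma>*a, 0, \<tau>*b, 0) | \<sigma> \<tau>. \<sigma> \<in> {1,-1} \<and> \<tau> \<in> {1,-1}} \<union>
                {(\<sigma>*a, 0, b * cos \<alpha>, b * sin \<alpha>) | \<sigma> \<alpha>. \<sigma> \<in> {1,-1} \<and> 0 \<le> \<alpha> \<and> \<alpha> < 2*pi}
        in argmin_on S3 (\<lambda>q. W10 (diag3 l1 l2 l2) (quatP q)) = Q
           \<and> argmin_on SO3 (W10 (diag3 l1 l2 l2)) = quatP ` Q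
           \<and> (\<forall>R\<in>argmin_on SO3 (W10 (diag3 l1 l2 l2)).
                W10 (diag3 l1 l2 l2) R = (l2 - 1)^2 + (1/2) * (l1 - l2)^2)))
    \<and> (l1 + l2 \<le> 2 \<longrightarrow>
         argmin_on S3 (\<lambda>q. W10 (diag3 l1 l2 l2) (quatP q)) = {(1,0,0,0), (-1,0,0,0)}
       \<and> argmin_on SO3 (W10 (diag3 l1 l2 l2)) = {mat 1})"
proof -
  note argmin_SO3 = argmin_on_image[OF quatP_image_S3, of "W10 (diag3 l1 l2 l2)"]
  have large: "l1 + l2 > 2 \<longrightarrow> argmin_on S3 (quat_energy l1 l2) = Q
      \<and> argmin_on SO3 (W10 (diag3 l1 l2 l2)) = quatP ` Q
      \<and> (\<forall>R\<in>argmin_on SO3 (W10 (diag3 l1 l2 l2)).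
            W10 (diag3 l1 l2 l2) R = (l2 - 1)^2 + (1/2) * (l1 - l2)^2)"
    if "l1 + l2 > 2 \<Longrightarrow> argmin_on S3 (quat_energy l1 l2) = Q" for Q
    using that W10_on_argmin_SO3_sum_gt_2[OF assms] unfolding argmin_SO3 by blast
  have small: "l1 + l2 \<le> 2 \<longrightarrow> argmin_on S3 (quat_energy l1 l2) = {(1,0,0,0), (-1,0,0,0)}
      \<and> argmin_on SO3 (W10 (diag3 l1 l2 l2)) = {mat 1}"
    using argmin_quat_energy_sum_le_2[OF assms] argmin_SO3 by (simp add: quatP_identity)
  show ?thesis
    using argmax_quat_energy[OF assms] argmax_W10_SO3[OF assms] small
      large[OF argmin_quat_energy_sum_gt_2[OF assms _ refl refl]]
    unfolding Let_def by (intro conjI) assumption+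
qed

end
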